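(* For all natural numbers $m$ and $n$, every vertex of the polytope $\operatorname{Hom}(\Box_m,\triangle_n)$ has rank $0$ or $1$; that is, $$\operatorname{vert}(\Box_m,\triangle_n)=\operatorname{vert}^{(0)}(\Box_m,\triangle_n)\cup\operatorname{vert}^{(1)}(\Box_m,\triangle_n).$$
   Context: For convex polytopes $P,Q$ (in real finite-dimensional vector spaces), $\operatorname{Hom}(P,Q)$ denotes the set of maps $P\to Q$ that are restrictions of affine maps $\operatorname{Aff}(P)\to\operatorname{Aff}(Q)$ between the affine hulls; viewed as a subset of the real affine space of all affine maps $\operatorname{Aff}(P)\to\operatorname{Aff}(Q)$, it is a convex polytope. $\operatorname{vert}(P,Q)$ denotes its set of vertices (called vertex maps). The rank of $f\in\operatorname{Hom}(P,Q)$ is $\dim\operatorname{Aff}(f(P))$, and $\operatorname{vert}^{(k)}(P,Q)$ is the set of vertex maps of rank $k$. $\triangle_n=\operatorname{conv}(0,e_1,\ldots,e_n)\subset\mathbb{R}^n$ and $\Box_m=\operatorname{conv}\{(a_1,\ldots,a_m): a_i=\pm1\}\subset\mathbb{R}^m$, where $e_i$ are standard basis vectors. *)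

theory Defs
  imports Complex_Main
begin

text \<open>Real n-space R^n is modelled as the functions x :: nat => real with
  x i = 0 for all i >= n (coordinates are indexed 0..n-1).\<close>

definition rvec :: "nat \<Rightarrow> (nat \<Rightarrow> real) set" where
  "rvec n = {x. \<forall>i\<ge>n. x i = 0}"

definition cvx_hull :: "(nat \<Rightarrow> real) set \<Rightarrow> (nat \<Rightarrow> real) set" where
  "cvx_hull V = {x. \<exists>S u. finite S \<and> S \<subseteq> V \<and> (\<forall>v\<in>S. 0 \<le> u v) \<and> sum u S = 1
                    \<and> x = (\<lambda>i. \<Sum>v\<in>S. u v * v i)}"

definition cube :: "nat \<Rightarrow> (nat \<Rightarrow> real) set" where
  "cube m = cvx_hull {x \<in> rvec m. \<forall>i<m. x i = 1 \<or> x i = -1}"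

definition unit_vec :: "nat \<Rightarrow> nat \<Rightarrow> real" where
  "unit_vec i = (\<lambda>j. if j = i then 1 else 0)"

definition simplex :: "nat \<Rightarrow> (nat \<Rightarrow> real) set" where
  "simplex n = cvx_hull (insert (\<lambda>_. 0) (unit_vec ` {..<n}))"

text \<open>Affine maps R^m -> R^n (the affine hulls of the cube and the simplex),
  represented as functions that are 0 outside R^m, so that equality of such
  functions is equality of affine maps; the affine space structure is pointwise.\<close>

definition affine_map :: "nat \<Rightarrow> nat \<Rightarrow> ((nat \<Rightarrow> real) \<Rightarrow> (nat \<Rightarrow> real)) \<Rightarrow> bool" where
  "affine_map m n F \<longleftrightarrow>
     (\<forall>x\<in>rvec m. F x \<in> rvec n) \<and> (\<forall>x. x \<notin> rvec m \<longrightarrow> F x = (\<lambda>_. 0)) \<and>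
     (\<forall>x\<in>rvec m. \<forall>y\<in>rvec m. \<forall>t::real.
        F (\<lambda>i. (1 - t) * x i + t * y i) = (\<lambda>i. (1 - t) * F x i + t * F y i))"

definition Hom :: "nat \<Rightarrow> nat \<Rightarrow> (nat \<Rightarrow> real) set \<Rightarrow> (nat \<Rightarrow> real) set
                   \<Rightarrow> ((nat \<Rightarrow> real) \<Rightarrow> (nat \<Rightarrow> real)) set" where
  "Hom m n P Q = {F. affine_map m n F \<and> F ` P \<subseteq> Q}"

definition vert :: "((nat \<Rightarrow> real) \<Rightarrow> (nat \<Rightarrow> real)) set
                    \<Rightarrow> ((nat \<Rightarrow> real) \<Rightarrow> (nat \<Rightarrow> real)) set" where
  "vert H = {F \<in> H. \<not> (\<exists>G\<in>H. \<exists>K\<in>H. \<exists>u::real. G \<noteq> K \<and> 0 < u \<and> u < 1 \<and>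
                          F = (\<lambda>x i. (1 - u) * G x i + u * K x i))}"

definition aff_indep :: "nat \<Rightarrow> (nat \<Rightarrow> nat \<Rightarrow> real) \<Rightarrow> bool" where
  "aff_indep k p \<longleftrightarrow>
     (\<forall>c::nat \<Rightarrow> real. (\<Sum>j\<le>k. c j) = 0 \<and> (\<lambda>i. \<Sum>j\<le>k. c j * p j i) = (\<lambda>_. 0)
        \<longrightarrow> (\<forall>j\<le>k. c j = 0))"

definition aff_dimension :: "(nat \<Rightarrow> real) set \<Rightarrow> nat" where
  "aff_dimension S = (GREATEST k. \<exists>p. (\<forall>j\<le>k. p j \<in> S) \<and> aff_indep k p)"

definition map_rank :: "(nat \<Rightarrow> real) set \<Rightarrow> ((nat \<Rightarrow> real) \<Rightarrow> (nat \<Rightarrow> real)) \<Rightarrow> nat" where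
  "map_rank P F = aff_dimension (F ` P)"

end

theory Submission
  imports Defs
begin

text \<open>Write an affine map as F x = b + \<Sum>i. x i \<cdot> c i with columns c i. It maps the cube
  into the simplex iff \<Sum>i. \<bar>c i j\<bar> \<le> b j for every j and
  \<Sum>j. b j + \<Sum>i. \<bar>\<Sum>j. c i j\<bar> \<le> 1 (test the sign vectors).
  Rescaling each column c k by 1 + t k, where \<bar>t k\<bar> \<le> 1, and adding \<Sum>k. t k \<cdot> \<bar>c k j\<bar>
  to b j leaves the slack of the first inequalities unchanged and changes that of the last
  one by \<Sum>k. t k \<cdot> W k, with W k = \<Sum>j. \<bar>c k j\<bar> + \<bar>\<Sum>j. c k j\<bar>. If two columns
  c i, c i' are nonzero, then W i, W i' > 0, and the t supported on {i, i'} with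
  t i \<cdot> W i + t i' \<cdot> W i' = 0 and its negative give two distinct maps in Hom with
  midpoint F. Hence a vertex map has at most one nonzero column, and the image of the
  cube is a point or a segment.\<close>

text \<open>The cut-off outside the first m and n coordinates makes this an affine_map for
  arbitrary b and c.\<close>

definition affine_of :: "nat \<Rightarrow> nat \<Rightarrow> (nat \<Rightarrow> real) \<Rightarrow> (nat \<Rightarrow> nat \<Rightarrow> real)
                         \<Rightarrow> (nat \<Rightarrow> real) \<Rightarrow> (nat \<Rightarrow> real)" where
  "affine_of m n b c x =
     (if x \<in> rvec m then (\<lambda>j. if j < n then b j + (\<Sum>i<m. x i * c i j) else 0) else (\<lambda>_. 0))"

definition lin_coeff :: "((nat \<Rightarrow> real) \<Rightarrow> (nat \<Rightarrow> real)) \<Rightarrow> nat \<Rightarrow> nat \<Rightarrow> real" where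
  "lin_coeff F i j = F (unit_vec i) j - F (\<lambda>_. 0) j"

lemma zero_in_rvec [simp]: "(\<lambda>_. 0) \<in> rvec m"
  by (simp add: rvec_def)

lemma unit_vec_in_rvec: "i < m \<Longrightarrow> unit_vec i \<in> rvec m"
  by (simp add: rvec_def unit_vec_def)

lemma affine_map_in_rvec: "affine_map m n F \<Longrightarrow> x \<in> rvec m \<Longrightarrow> F x \<in> rvec n"
  unfolding affine_map_def by blast

lemma affine_map_outside: "affine_map m n F \<Longrightarrow> x \<notin> rvec m \<Longrightarrow> F x = (\<lambda>_. 0)"
  unfolding affine_map_def by blast

lemma affine_map_combination:
  "affine_map m n F \<Longrightarrow> x \<in> rvec m \<Longrightarrow> y \<in> rvec m \<Longrightarrow>
     F (\<lambda>i. (1 - t) * x i + t * y i) = (\<lambda>j. (1 - t) * F x j + t * F y j)"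
  unfolding affine_map_def by blast

lemma affine_map_scale:
  assumes "affine_map m n F" "x \<in> rvec m"
  shows "F (\<lambda>i. t * x i) = (\<lambda>j. (1 - t) * F (\<lambda>_. 0) j + t * F x j)"
  using affine_map_combination[OF assms(1) zero_in_rvec assms(2), of t] by simp

lemma affine_map_add:
  assumes "affine_map m n F" "x \<in> rvec m" "y \<in> rvec m"
  shows "F (\<lambda>i. x i + y i) = (\<lambda>j. F x j + F y j - F (\<lambda>_. 0) j)"
proof -
  define w where "w = (\<lambda>i. (1 - 1/2) * x i + (1/2::real) * y i)"
  have "w \<in> rvec m" using assms(2,3) by (simp add: rvec_def w_def)
  moreover have "(\<lambda>i. x i + y i) = (\<lambda>i. 2 * w i)" by (auto simp: w_def)
  ultimately have "F (\<lambda>i. x i + y i) = (\<lambda>j. (1 - 2) * F (\<lambda>_. 0) j + 2 * F w j)"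
    using affine_map_scale[OF assms(1)] by simp
  then show ?thesis
    using affine_map_combination[OF assms, of "1/2"] by (auto simp: w_def)
qed

lemma affine_map_coordinates_upto:
  assumes "affine_map m n F" "k \<le> m" "x \<in> rvec k"
  shows "F x = (\<lambda>j. F (\<lambda>_. 0) j + (\<Sum>i<k. x i * lin_coeff F i j))"
  using assms(2,3)
proof (induction k arbitrary: x)
  case 0
  then have "x = (\<lambda>_. 0)" by (auto simp: rvec_def)
  then show ?case by simp
next
  case (Suc k)
  define x' where "x' = x(k := 0)"
  define y where "y = (\<lambda>i. x k * unit_vec k i)"
  have "x' \<in> rvec k" using Suc.prems(2) by (auto simp: rvec_def x'_def)
  moreover have "(\<Sum>i<k. x' i * lin_coeff F i j) = (\<Sum>i<k. x i * lin_coeff F i j)" for j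
    by (rule sum.cong) (auto simp: x'_def)
  ultimately have IH: "F x' = (\<lambda>j. F (\<lambda>_. 0) j + (\<Sum>i<k. x i * lin_coeff F i j))"
    using Suc.IH[of x'] Suc.prems(1) by simp
  have "x' \<in> rvec m" "y \<in> rvec m"
    using Suc.prems by (auto simp: rvec_def x'_def y_def unit_vec_def)
  moreover have "x = (\<lambda>i. x' i + y i)" by (auto simp: x'_def y_def unit_vec_def)
  ultimately have "F x = (\<lambda>j. F x' j + F y j - F (\<lambda>_. 0) j)"
    using affine_map_add[OF assms(1)] by simp
  moreover have "F y = (\<lambda>j. (1 - x k) * F (\<lambda>_. 0) j + x k * F (unit_vec k) j)"
    unfolding y_def using Suc.prems(1) by (intro affine_map_scale[OF assms(1) unit_vec_in_rvec]) simp
  ultimately show ?case using IH by (auto simp: lin_coeff_def algebra_simps)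
qed

lemma affine_map_eq_affine_of:
  assumes "affine_map m n F"
  shows "F = affine_of m n (F (\<lambda>_. 0)) (lin_coeff F)"
proof
  fix x
  show "F x = affine_of m n (F (\<lambda>_. 0)) (lin_coeff F) x"
  proof (cases "x \<in> rvec m")
    case True
    then have "F x \<in> rvec n" using assms by (rule affine_map_in_rvec[rotated])
    then show ?thesis
      using affine_map_coordinates_upto[OF assms order_refl True] True
      by (auto simp: affine_of_def rvec_def)
  qed (simp add: affine_of_def affine_map_outside[OF assms])
qed

lemma affine_map_affine_of: "affine_map m n (affine_of m n b c)"
  unfolding affine_map_def
proof (intro conjI ballI allI impI)
  fix x y :: "nat \<Rightarrow> real" and t :: real
  assume "x \<in> rvec m" "y \<in> rvec m"
  moreover from this have "(\<lambda>i. (1 - t) * x i + t * y i) \<in> rvec m" by (simp add: rvec_def)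
  ultimately show "affine_of m n b c (\<lambda>i. (1 - t) * x i + t * y i)
      = (\<lambda>j. (1 - t) * affine_of m n b c x j + t * affine_of m n b c y j)"
    by (auto simp: affine_of_def sum.distrib sum_distrib_left sum_subtractf ring_distribs mult.assoc
        intro!: ext)
qed (auto simp: affine_of_def rvec_def)

lemma lin_coeff_affine_of: "i < m \<Longrightarrow> j < n \<Longrightarrow> lin_coeff (affine_of m n b c) i j = c i j"
proof -
  assume "i < m" "j < n"
  moreover have "(\<Sum>k<m. unit_vec i k * c k j) = c i j"
    using \<open>i < m\<close> by (simp add: unit_vec_def if_distrib[of "\<lambda>x. x * _"] cong: if_cong)
  ultimately show ?thesis by (simp add: lin_coeff_def affine_of_def unit_vec_in_rvec)
qed

lemma affine_of_convex_combination:
  "(\<lambda>x j. (1 - u) * affine_of m n b c x j + u * affine_of m n b' c' x j)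
     = affine_of m n (\<lambda>j. (1 - u) * b j + u * b' j) (\<lambda>i j. (1 - u) * c i j + u * c' i j)"
  by (auto simp: affine_of_def sum.distrib sum_distrib_left sum_subtractf ring_distribs mult.assoc
      mult.left_commute[of u] intro!: ext)

lemma cube_memD:
  assumes "x \<in> cube m"
  shows "x \<in> rvec m" "\<bar>x i\<bar> \<le> 1"
proof -
  obtain S u where S: "S \<subseteq> {x \<in> rvec m. \<forall>i<m. x i = 1 \<or> x i = -1}"
    "\<forall>v\<in>S. 0 \<le> u v" "sum u S = 1" "x = (\<lambda>i. \<Sum>v\<in>S. u v * v i)"
    using assms unfolding cube_def cvx_hull_def by blast
  have vertex: "v \<in> rvec m" "\<bar>v i\<bar> \<le> 1" if "v \<in> S" for v
  proof -
    have "v \<in> rvec m" "\<forall>i<m. v i = 1 \<or> v i = -1" using S(1) that by blast+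
    then show "v \<in> rvec m" "\<bar>v i\<bar> \<le> 1"
      by (simp_all add: rvec_def) (metis abs_minus_cancel abs_one abs_zero linorder_not_le order_refl zero_le_one)
  qed
  show "x \<in> rvec m" using S(4) vertex(1) by (auto simp: rvec_def intro!: sum.neutral)
  have "\<bar>x i\<bar> \<le> (\<Sum>v\<in>S. \<bar>u v * v i\<bar>)" using S(4) sum_abs by simp
  also have "\<dots> \<le> (\<Sum>v\<in>S. u v)"
    by (rule sum_mono) (use S(2) vertex(2) in \<open>auto simp: abs_mult intro: mult_left_le\<close>)
  finally show "\<bar>x i\<bar> \<le> 1" using S(3) by simp
qed

lemma cube_vertex_mem:
  assumes "v \<in> rvec m" "\<forall>i<m. v i = 1 \<or> v i = -1"
  shows "v \<in> cube m"
  unfolding cube_def cvx_hull_def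
  by (rule CollectI, rule exI[of _ "{v}"], rule exI[of _ "\<lambda>_. 1"]) (use assms in auto)

lemma inj_on_unit_vec: "inj_on unit_vec A"
  by (rule inj_onI) (metis unit_vec_def zero_neq_one)

lemma unit_vec_neq_zero: "unit_vec i \<noteq> (\<lambda>_. 0)"
  by (metis unit_vec_def zero_neq_one)

lemma simplex_memD:
  assumes "y \<in> simplex n"
  shows "y \<in> rvec n" "0 \<le> y j" "(\<Sum>j<n. y j) \<le> 1"
proof -
  obtain S u where S: "S \<subseteq> insert (\<lambda>_. 0) (unit_vec ` {..<n})"
    "\<forall>v\<in>S. 0 \<le> u v" "sum u S = 1" "y = (\<lambda>i. \<Sum>v\<in>S. u v * v i)"
    using assms unfolding simplex_def cvx_hull_def by blast
  have vertex: "v \<in> rvec n" "0 \<le> v j" "(\<Sum>j<n. v j) \<le> 1" if "v \<in> S" for v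
    using S(1) that by (auto simp: unit_vec_def rvec_def)
  show "y \<in> rvec n" using S(4) vertex(1) by (auto simp: rvec_def intro!: sum.neutral)
  show "0 \<le> y j" using S(2,4) vertex(2) by (auto intro!: sum_nonneg)
  have "(\<Sum>j<n. y j) = (\<Sum>v\<in>S. u v * (\<Sum>j<n. v j))"
    using S(4) by (simp add: sum_distrib_left sum.swap[of _ S])
  also have "\<dots> \<le> (\<Sum>v\<in>S. u v)"
    by (rule sum_mono) (use S(2) vertex(3) in \<open>auto intro: mult_left_le\<close>)
  finally show "(\<Sum>j<n. y j) \<le> 1" using S(3) by simp
qed

lemma simplex_memI:
  assumes "y \<in> rvec n" "\<And>j. 0 \<le> y j" "(\<Sum>j<n. y j) \<le> 1"
  shows "y \<in> simplex n"
proof -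
  define E where "E = unit_vec ` {..<n}"
  define u where "u v = (if v = (\<lambda>_. 0) then 1 - (\<Sum>j<n. y j) else (\<Sum>j<n. v j * y j))" for v
  have u_unit_vec: "u (unit_vec j) = y j" if "j < n" for j
    using that unit_vec_neq_zero
    by (simp add: u_def unit_vec_def if_distrib[of "\<lambda>x. x * _"] cong: if_cong)
  have sum_E: "(\<Sum>v\<in>E. g v) = (\<Sum>j<n. g (unit_vec j))" for g :: "(nat \<Rightarrow> real) \<Rightarrow> real"
    unfolding E_def by (rule sum.reindex[OF inj_on_unit_vec, unfolded comp_def])
  have zero_notin_E: "(\<lambda>_. 0) \<notin> E" unfolding E_def by (metis imageE unit_vec_neq_zero)
  show ?thesis unfolding simplex_def cvx_hull_def
  proof (rule CollectI, intro exI conjI)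
    show "finite (insert (\<lambda>_. 0) E)" "insert (\<lambda>_. 0) E \<subseteq> insert (\<lambda>_. 0) (unit_vec ` {..<n})"
      by (auto simp: E_def)
    show "\<forall>v\<in>insert (\<lambda>_. 0) E. 0 \<le> u v"
      using assms(2,3) u_unit_vec by (auto simp: u_def E_def)
    have "sum u (insert (\<lambda>_. 0) E) = u (\<lambda>_. 0) + (\<Sum>j<n. u (unit_vec j))"
      using zero_notin_E sum_E by (simp add: E_def)
    also have "(\<Sum>j<n. u (unit_vec j)) = (\<Sum>j<n. y j)" by (simp add: u_unit_vec)
    finally show "sum u (insert (\<lambda>_. 0) E) = 1" by (simp add: u_def)
    show "y = (\<lambda>i. \<Sum>v\<in>insert (\<lambda>_. 0) E. u v * v i)"
    proof
      fix i
      have "(\<Sum>v\<in>insert (\<lambda>_. 0) E. u v * v i) = (\<Sum>j<n. y j * unit_vec j i)"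
        using zero_notin_E sum_E by (simp add: E_def u_unit_vec)
      also have "\<dots> = y i"
        using assms(1) by (simp add: unit_vec_def rvec_def if_distrib[of "\<lambda>x. _ * x"] cong: if_cong)
      finally show "y i = (\<Sum>v\<in>insert (\<lambda>_. 0) E. u v * v i)" by simp
    qed
  qed
qed

lemma abs_mult_le_if_abs_le_1: "\<bar>x\<bar> \<le> 1 \<Longrightarrow> \<bar>x * a\<bar> \<le> \<bar>a::real\<bar>"
  by (simp add: abs_mult mult_left_le_one_le)

section \<open>Inequalities describing Hom(cube, simplex)\<close>

definition hom_cube_simplex_ineqs :: "nat \<Rightarrow> nat \<Rightarrow> (nat \<Rightarrow> real) \<Rightarrow> (nat \<Rightarrow> nat \<Rightarrow> real) \<Rightarrow> bool" where
  "hom_cube_simplex_ineqs m n b c \<longleftrightarrow>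
     (\<forall>j<n. (\<Sum>i<m. \<bar>c i j\<bar>) \<le> b j) \<and> (\<Sum>j<n. b j) + (\<Sum>i<m. \<bar>\<Sum>j<n. c i j\<bar>) \<le> 1"

lemma sum_affine_of:
  "x \<in> rvec m \<Longrightarrow> (\<Sum>j<n. affine_of m n b c x j) = (\<Sum>j<n. b j) + (\<Sum>i<m. x i * (\<Sum>j<n. c i j))"
  by (simp add: affine_of_def sum.distrib sum_distrib_left sum.swap[of _ "{..<n}"])

definition sign_vec :: "nat \<Rightarrow> (nat \<Rightarrow> real) \<Rightarrow> nat \<Rightarrow> real" where
  "sign_vec m f = (\<lambda>i. if i < m then (if 0 \<le> f i then 1 else -1) else 0)"

lemma sign_vec_in_rvec: "sign_vec m f \<in> rvec m"
  by (simp add: sign_vec_def rvec_def)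

lemma sign_vec_in_cube: "sign_vec m f \<in> cube m"
  by (rule cube_vertex_mem[OF sign_vec_in_rvec]) (simp add: sign_vec_def)

lemma sum_sign_vec_mult: "(\<Sum>i<m. sign_vec m f i * f i) = (\<Sum>i<m. \<bar>f i\<bar>)"
  by (rule sum.cong) (auto simp: sign_vec_def)

lemma affine_of_in_Hom_cube_simplexD:
  assumes "affine_of m n b c \<in> Hom m n (cube m) (simplex n)"
  shows "hom_cube_simplex_ineqs m n b c"
proof -
  have image: "affine_of m n b c (sign_vec m f) \<in> simplex n" for f
    using assms sign_vec_in_cube by (auto simp: Hom_def)
  have "(\<Sum>i<m. \<bar>c i j\<bar>) \<le> b j" if "j < n" for j
  proof -
    have "0 \<le> affine_of m n b c (sign_vec m (\<lambda>i. - c i j)) j"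
      by (rule simplex_memD(2)[OF image])
    moreover have "(\<Sum>i<m. sign_vec m (\<lambda>i. - c i j) i * c i j) = - (\<Sum>i<m. \<bar>c i j\<bar>)"
      using sum_sign_vec_mult[of m "\<lambda>i. - c i j"] by (simp add: sum_negf)
    ultimately show ?thesis using that sign_vec_in_rvec by (simp add: affine_of_def)
  qed
  moreover have "(\<Sum>j<n. affine_of m n b c (sign_vec m (\<lambda>i. \<Sum>j<n. c i j)) j) \<le> 1"
    by (rule simplex_memD(3)[OF image])
  ultimately show ?thesis
    by (simp add: hom_cube_simplex_ineqs_def sum_affine_of sign_vec_in_rvec sum_sign_vec_mult)
qed

lemma affine_of_in_Hom_cube_simplexI:
  assumes ineqs: "hom_cube_simplex_ineqs m n b c"
  shows "affine_of m n b c \<in> Hom m n (cube m) (simplex n)"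
proof -
  have "affine_of m n b c x \<in> simplex n" if "x \<in> cube m" for x
  proof (rule simplex_memI)
    have x: "x \<in> rvec m" "\<And>i. \<bar>x i\<bar> \<le> 1" using cube_memD[OF that] by auto
    show "affine_of m n b c x \<in> rvec n" using x(1) by (simp add: affine_of_def) (simp add: rvec_def)
    show "0 \<le> affine_of m n b c x j" for j
    proof -
      have "(\<Sum>i<m. - (x i * c i j)) \<le> (\<Sum>i<m. \<bar>c i j\<bar>)"
        by (rule sum_mono, rule abs_le_D2, rule abs_mult_le_if_abs_le_1[OF x(2)])
      moreover have "j < n \<Longrightarrow> (\<Sum>i<m. \<bar>c i j\<bar>) \<le> b j"
        using ineqs by (simp add: hom_cube_simplex_ineqs_def)
      ultimately show ?thesis using x(1) by (auto simp: affine_of_def sum_negf)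
    qed
    have "(\<Sum>i<m. x i * (\<Sum>j<n. c i j)) \<le> (\<Sum>i<m. \<bar>\<Sum>j<n. c i j\<bar>)"
      by (rule sum_mono, rule abs_le_D1, rule abs_mult_le_if_abs_le_1[OF x(2)])
    then show "(\<Sum>j<n. affine_of m n b c x j) \<le> 1"
      using ineqs by (simp add: sum_affine_of x(1) hom_cube_simplex_ineqs_def)
  qed
  then show ?thesis by (auto simp: Hom_def affine_map_affine_of)
qed

lemma affine_of_in_Hom_cube_simplex_iff:
  "affine_of m n b c \<in> Hom m n (cube m) (simplex n) \<longleftrightarrow> hom_cube_simplex_ineqs m n b c"
  using affine_of_in_Hom_cube_simplexD affine_of_in_Hom_cube_simplexI by blast

section \<open>Vertex maps have at most one nonzero column\<close>

definition col_weight :: "nat \<Rightarrow> (nat \<Rightarrow> nat \<Rightarrow> real) \<Rightarrow> nat \<Rightarrow> real" where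
  "col_weight n c k = (\<Sum>j<n. \<bar>c k j\<bar>) + \<bar>\<Sum>j<n. c k j\<bar>"

lemma hom_cube_simplex_ineqs_rescale:
  assumes ineqs: "hom_cube_simplex_ineqs m n b c"
    and t: "\<And>k. \<bar>t k\<bar> \<le> 1" "(\<Sum>k<m. t k * col_weight n c k) = 0"
  shows "hom_cube_simplex_ineqs m n (\<lambda>j. b j + (\<Sum>k<m. t k * \<bar>c k j\<bar>)) (\<lambda>k j. (1 + t k) * c k j)"
proof -
  have abs_rescale: "\<bar>(1 + t k) * a\<bar> = (1 + t k) * \<bar>a\<bar>" for k a
    using t(1)[of k] by (simp add: abs_mult)
  have rows: "(\<Sum>k<m. \<bar>(1 + t k) * c k j\<bar>) = (\<Sum>k<m. \<bar>c k j\<bar>) + (\<Sum>k<m. t k * \<bar>c k j\<bar>)" for j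
    by (simp only: abs_rescale) (simp add: ring_distribs sum.distrib)
  have cols: "(\<Sum>k<m. \<bar>\<Sum>j<n. (1 + t k) * c k j\<bar>)
      = (\<Sum>k<m. \<bar>\<Sum>j<n. c k j\<bar>) + (\<Sum>k<m. t k * \<bar>\<Sum>j<n. c k j\<bar>)"
    by (simp only: sum_distrib_left[symmetric] abs_rescale) (simp add: ring_distribs sum.distrib)
  have total: "(\<Sum>j<n. b j + (\<Sum>k<m. t k * \<bar>c k j\<bar>))
      = (\<Sum>j<n. b j) + (\<Sum>k<m. t k * (\<Sum>j<n. \<bar>c k j\<bar>))"
    by (simp add: sum.distrib sum_distrib_left sum.swap[of _ "{..<n}"])
  have "(\<Sum>k<m. t k * (\<Sum>j<n. \<bar>c k j\<bar>)) + (\<Sum>k<m. t k * \<bar>\<Sum>j<n. c k j\<bar>) = 0"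
    using t(2) by (simp add: col_weight_def ring_distribs sum.distrib)
  then show ?thesis
    using ineqs rows cols total by (simp add: hom_cube_simplex_ineqs_def)
qed

lemma affine_of_not_vert_if_rescalable:
  assumes ineqs: "hom_cube_simplex_ineqs m n b c"
    and t: "\<And>k. \<bar>t k\<bar> \<le> 1" "(\<Sum>k<m. t k * col_weight n c k) = 0"
    and k0: "k0 < m" "j0 < n" "t k0 * c k0 j0 \<noteq> 0"
  shows "affine_of m n b c \<notin> vert (Hom m n (cube m) (simplex n))"
proof
  assume vert: "affine_of m n b c \<in> vert (Hom m n (cube m) (simplex n))"
  define G where "G = affine_of m n (\<lambda>j. b j + (\<Sum>k<m. t k * \<bar>c k j\<bar>)) (\<lambda>k j. (1 + t k) * c k j)"
  define K where "K = affine_of m n (\<lambda>j. b j + (\<Sum>k<m. - t k * \<bar>c k j\<bar>)) (\<lambda>k j. (1 + - t k) * c k j)"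
  have "G \<in> Hom m n (cube m) (simplex n)"
    unfolding G_def affine_of_in_Hom_cube_simplex_iff
    using ineqs t(1,2) by (rule hom_cube_simplex_ineqs_rescale)
  moreover have "K \<in> Hom m n (cube m) (simplex n)"
    unfolding K_def affine_of_in_Hom_cube_simplex_iff
    using ineqs by (rule hom_cube_simplex_ineqs_rescale) (use t in \<open>simp_all add: sum_negf\<close>)
  moreover have "G \<noteq> K"
  proof
    assume "G = K"
    then have "lin_coeff G k0 j0 = lin_coeff K k0 j0" by simp
    then show False using k0 by (simp add: G_def K_def lin_coeff_affine_of algebra_simps)
  qed
  moreover have "affine_of m n b c = (\<lambda>x j. (1 - 1/2) * G x j + 1/2 * K x j)"
  proof -
    have "(\<lambda>j. (1 - 1/2) * (b j + (\<Sum>k<m. t k * \<bar>c k j\<bar>)) + 1/2 * (b j + (\<Sum>k<m. - t k * \<bar>c k j\<bar>))) = b"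
      by (simp add: sum_negf field_simps)
    moreover have "(\<lambda>k j. (1 - 1/2) * ((1 + t k) * c k j) + 1/2 * ((1 + - t k) * c k j)) = c"
      by (simp add: field_simps)
    ultimately show ?thesis unfolding G_def K_def affine_of_convex_combination by simp
  qed
  moreover have "0 < (1/2::real)" "(1/2::real) < 1" by simp_all
  ultimately show False using vert unfolding vert_def by blast
qed

lemma vert_Hom_cube_simplex_imp_ineqs:
  "affine_of m n b c \<in> vert (Hom m n (cube m) (simplex n)) \<Longrightarrow> hom_cube_simplex_ineqs m n b c"
  by (simp add: vert_def affine_of_in_Hom_cube_simplex_iff)

lemma vert_Hom_cube_simplex_two_columns:
  assumes vert: "affine_of m n b c \<in> vert (Hom m n (cube m) (simplex n))"
    and i: "i < m" "i' < m" "i \<noteq> i'"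
  shows "(\<forall>j<n. c i j = 0) \<or> (\<forall>j<n. c i' j = 0)"
proof (rule ccontr)
  assume "\<not> ?thesis"
  then obtain j1 j2 where j1: "j1 < n" "c i j1 \<noteq> 0" and j2: "j2 < n" "c i' j2 \<noteq> 0"
    by blast
  have weight_pos: "0 < col_weight n c k" if "j < n" "c k j \<noteq> 0" for k j
  proof -
    have "\<bar>c k j\<bar> \<le> (\<Sum>j<n. \<bar>c k j\<bar>)" by (rule member_le_sum) (use that in auto)
    then show ?thesis using that by (simp add: col_weight_def)
  qed
  define W where "W = col_weight n c i + col_weight n c i'"
  define t where "t k = (if k = i then col_weight n c i' / W else if k = i' then - col_weight n c i / W else 0)"
    for k
  have W: "0 < col_weight n c i" "0 < col_weight n c i'"
    using weight_pos j1 j2 by auto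
  have "\<bar>t k\<bar> \<le> 1" for k
    using W by (simp add: t_def W_def abs_div_pos)
  moreover have "(\<Sum>k<m. t k * col_weight n c k) = 0"
  proof -
    have "(\<Sum>k<m. t k * col_weight n c k)
        = (\<Sum>k<m. (if k = i then t i * col_weight n c i else 0) + (if k = i' then t i' * col_weight n c i' else 0))"
      by (rule sum.cong) (use i(3) in \<open>auto simp: t_def\<close>)
    also have "\<dots> = t i * col_weight n c i + t i' * col_weight n c i'"
      using i by (simp add: sum.distrib)
    also have "\<dots> = 0"
      using i(3) by (simp add: t_def field_simps)
    finally show ?thesis .
  qed
  moreover have "t i * c i j1 \<noteq> 0"
    using W j1 by (simp add: t_def W_def)
  ultimately show False
    using affine_of_not_vert_if_rescalable[OF vert_Hom_cube_simplex_imp_ineqs[OF vert] _ _ i(1) j1(1)] vert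
    by blast
qed

lemma vert_Hom_cube_simplex_single_column:
  assumes "affine_of m n b c \<in> vert (Hom m n (cube m) (simplex n))"
  obtains i0 where "\<And>i j. i < m \<Longrightarrow> i \<noteq> i0 \<Longrightarrow> j < n \<Longrightarrow> c i j = 0"
proof (cases "\<exists>i0<m. \<exists>j<n. c i0 j \<noteq> 0")
  case True
  then obtain i0 j0 where "i0 < m" "j0 < n" "c i0 j0 \<noteq> 0" by blast
  then show ?thesis
    using that[of i0] vert_Hom_cube_simplex_two_columns[OF assms] by blast
next
  case False
  then show ?thesis using that by blast
qed

lemma not_aff_indep_collinear:
  assumes "2 \<le> k" "\<And>j. j \<le> 2 \<Longrightarrow> q j = (\<lambda>i. p i + s j * w i)"
  shows "\<not> aff_indep k q"
proof
  assume indep: "aff_indep k q"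
  \<comment> \<open>(s 1 - s 2, s 2 - s 0, s 0 - s 1) is an affine dependence of q 0, q 1, q 2; it vanishes
    only if s 0 = s 1, and then q 0 = q 1\<close>
  define a where "a = (if s 0 = s 1 then [1, -1, 0] else [s 1 - s 2, s 2 - s 0, s 0 - s 1])"
  define d where "d j = (if j \<le> 2 then a ! j else 0)" for j :: nat
  have restrict: "(\<Sum>j\<le>k. f j) = f 0 + f 1 + f 2" if "\<And>j. 2 < j \<Longrightarrow> f j = 0" for f :: "nat \<Rightarrow> real"
  proof -
    have "(\<Sum>j\<le>k. f j) = (\<Sum>j\<le>2. f j)"
      by (rule sum.mono_neutral_right) (use assms(1) that in auto)
    then show ?thesis by (simp add: numeral_2_eq_2)
  qed
  have "(\<Sum>j\<le>k. d j) = 0"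
    by (subst restrict) (auto simp: d_def a_def)
  moreover have "(\<lambda>i. \<Sum>j\<le>k. d j * q j i) = (\<lambda>_. 0)"
  proof
    fix i
    show "(\<Sum>j\<le>k. d j * q j i) = 0"
      by (subst restrict) (auto simp: d_def a_def assms(2) algebra_simps)
  qed
  ultimately have "\<forall>j\<le>k. d j = 0" using indep unfolding aff_indep_def by blast
  then have "d 0 = 0" "d 2 = 0" using assms(1) by auto
  then show False by (auto simp: d_def a_def split: if_splits)
qed

lemma aff_dimension_le:
  assumes "y \<in> S" "\<And>k q. (\<forall>j\<le>k. q j \<in> S) \<Longrightarrow> aff_indep k q \<Longrightarrow> k \<le> d"
  shows "aff_dimension S \<le> d"
proof -
  define P where "P k \<longleftrightarrow> (\<exists>q. (\<forall>j\<le>k. q j \<in> S) \<and> aff_indep k q)" for k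
  have "P 0" unfolding P_def aff_indep_def
    by (rule exI[of _ "\<lambda>_. y"]) (use assms(1) in auto)
  moreover have bound: "P k \<Longrightarrow> k \<le> d" for k
    using assms(2) by (auto simp: P_def)
  ultimately have "P (Greatest P)" by (metis GreatestI_nat)
  then show ?thesis unfolding aff_dimension_def P_def[symmetric] by (rule bound)
qed

lemma aff_dimension_line_le_1:
  assumes "y \<in> S" "\<And>y. y \<in> S \<Longrightarrow> \<exists>s. y = (\<lambda>i. p i + s * w i)"
  shows "aff_dimension S \<le> 1"
proof (rule aff_dimension_le[OF assms(1)], rule ccontr)
  fix k q
  assume q: "\<forall>j\<le>k. q j \<in> S" "aff_indep k q" and "\<not> k \<le> 1"
  then have k: "2 \<le> k" by simp
  have "\<exists>s. q j = (\<lambda>i. p i + s * w i)" if "j \<le> 2" for j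
    using assms(2) q(1) k that by auto
  then obtain s where "\<And>j. j \<le> 2 \<Longrightarrow> q j = (\<lambda>i. p i + s j * w i)" by metis
  then show False using not_aff_indep_collinear[OF k] q(2) by blast
qed

lemma map_rank_affine_of_single_column:
  assumes single: "\<And>i j. i < m \<Longrightarrow> i \<noteq> i0 \<Longrightarrow> j < n \<Longrightarrow> c i j = 0"
  shows "map_rank (cube m) (affine_of m n b c) \<le> 1"
proof -
  have single_sum: "(\<Sum>i<m. x i * c i j) = x i0 * c i0 j" if "x \<in> rvec m" "j < n" for x j
  proof (cases "i0 < m")
    case True
    have "(\<Sum>i<m. x i * c i j) = (\<Sum>i<m. if i = i0 then x i0 * c i0 j else 0)"
      by (rule sum.cong) (use single that in auto)
    then show ?thesis using True by simp
  next
    case False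
    then show ?thesis using single that by (simp add: rvec_def)
  qed
  have line: "\<exists>s. y = (\<lambda>j. (if j < n then b j else 0) + s * (if j < n then c i0 j else 0))"
    if y: "y \<in> affine_of m n b c ` cube m" for y
  proof -
    obtain x where "x \<in> cube m" "y = affine_of m n b c x" using y by blast
    then show ?thesis
      using cube_memD(1) single_sum by (intro exI[of _ "x i0"]) (auto simp: affine_of_def)
  qed
  show ?thesis
    unfolding map_rank_def by (rule aff_dimension_line_le_1[OF imageI[OF sign_vec_in_cube] line])
qed

theorem theorem4p1:
  fixes m n :: nat
  shows "vert (Hom m n (cube m) (simplex n))
           = {F \<in> vert (Hom m n (cube m) (simplex n)). map_rank (cube m) F = 0}
             \<union> {F \<in> vert (Hom m n (cube m) (simplex n)). map_rank (cube m) F = 1}"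
proof -
  have "map_rank (cube m) F \<le> 1" if vert: "F \<in> vert (Hom m n (cube m) (simplex n))" for F
  proof -
    have "affine_map m n F" using vert by (simp add: vert_def Hom_def)
    then have F: "F = affine_of m n (F (\<lambda>_. 0)) (lin_coeff F)" by (rule affine_map_eq_affine_of)
    then obtain i0 where "\<And>i j. i < m \<Longrightarrow> i \<noteq> i0 \<Longrightarrow> j < n \<Longrightarrow> lin_coeff F i j = 0"
      using vert vert_Hom_cube_simplex_single_column by metis
    then show ?thesis by (subst F) (rule map_rank_affine_of_single_column)
  qed
  then show ?thesis by fastforce
qed

end
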